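(* Let $\mathcal{H}$ be a hypertree and $u,v$ two vertices of it. Then $uv$ is an edge of some host tree of $\mathcal{H}$ if and only if $u$ and $v$ lie in different connected components of the 2-section of $\overline{\mathcal{H}_{uv}}$.
   Context: A hypergraph $\mathcal{H}$ has a finite vertex set $V(\mathcal{H})$ and a finite family of nonempty subsets (edges). A host tree is a tree on $V(\mathcal{H})$ in which every edge induces a connected subgraph; a hypertree is a hypergraph with a host tree. For $A\subseteq V(\mathcal{H})$, $\overline{\mathcal{H}_A}$ is the hypergraph on $V(\mathcal{H})$ whose edges are the edges of $\mathcal{H}$ not containing $A$; $\overline{\mathcal{H}_{uv}}=\overline{\mathcal{H}_{\{u,v\}}}$. The 2-section of a hypergraph is the graph on its vertex set in which two distinct vertices are adjacent iff some edge contains both. *)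

theory Defs
  imports Main
begin

definition hypergraph :: "'a set \<Rightarrow> 'a set set \<Rightarrow> bool" where
  "hypergraph V Es \<longleftrightarrow> finite V \<and> finite Es \<and> (\<forall>e\<in>Es. e \<noteq> {} \<and> e \<subseteq> V)"

definition is_graph :: "'a set \<Rightarrow> 'a set set \<Rightarrow> bool" where
  "is_graph V T \<longleftrightarrow> (\<forall>e\<in>T. \<exists>x y. e = {x, y} \<and> x \<noteq> y \<and> x \<in> V \<and> y \<in> V)"

definition connected_on :: "'a set set \<Rightarrow> 'a set \<Rightarrow> bool" where
  "connected_on T S \<longleftrightarrow>
     (\<forall>x\<in>S. \<forall>y\<in>S. (x, y) \<in> {(a, b). {a, b} \<in> T \<and> a \<in> S \<and> b \<in> S}\<^sup>*)"

definition is_cycle :: "'a set set \<Rightarrow> 'a list \<Rightarrow> bool" where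
  "is_cycle T xs \<longleftrightarrow> 3 \<le> length xs \<and> distinct xs \<and>
     (\<forall>i < length xs. {xs ! i, xs ! ((i + 1) mod length xs)} \<in> T)"

definition is_tree :: "'a set \<Rightarrow> 'a set set \<Rightarrow> bool" where
  "is_tree V T \<longleftrightarrow> is_graph V T \<and> connected_on T V \<and> \<not> (\<exists>xs. is_cycle T xs)"

definition host_tree :: "'a set \<Rightarrow> 'a set set \<Rightarrow> 'a set set \<Rightarrow> bool" where
  "host_tree V Es T \<longleftrightarrow> is_tree V T \<and> (\<forall>e\<in>Es. connected_on T e)"

definition hypertree :: "'a set \<Rightarrow> 'a set set \<Rightarrow> bool" where
  "hypertree V Es \<longleftrightarrow> hypergraph V Es \<and> (\<exists>T. host_tree V Es T)"

text \<open>Edges of the hypergraph \<open>\<overline>H_A\<close>: edges not containing A (vertex set unchanged).\<close>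
definition edges_avoiding :: "'a set set \<Rightarrow> 'a set \<Rightarrow> 'a set set" where
  "edges_avoiding Es A = {e \<in> Es. \<not> A \<subseteq> e}"

definition two_section_adj :: "'a set \<Rightarrow> 'a set set \<Rightarrow> 'a \<Rightarrow> 'a \<Rightarrow> bool" where
  "two_section_adj V Es x y \<longleftrightarrow> x \<in> V \<and> y \<in> V \<and> x \<noteq> y \<and> (\<exists>e\<in>Es. x \<in> e \<and> y \<in> e)"

definition same_component :: "'a set \<Rightarrow> 'a set set \<Rightarrow> 'a \<Rightarrow> 'a \<Rightarrow> bool" where
  "same_component V Es x y \<longleftrightarrow> (x, y) \<in> {(a, b). two_section_adj V Es a b}\<^sup>*"

end

theory Submission
  imports Defs "HOL-Library.Transitive_Closure_Table"
begin

text \<open>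
  Deleting an edge uv from a host tree T splits it into two subtrees. A hyperedge not containing
  both u and v induces a connected subgraph of T that does not use uv, so it lies inside one of
  the two subtrees; hence every component of the 2-section of the hyperedges avoiding {u, v}
  stays on one side, and u and v are separated.

  Conversely, let C be the component of u in that 2-section and take any host tree T. The
  T-path from u to v leaves C through some edge xy, with u on the x-side and v on the y-side of
  T - xy, so exchanging xy for uv yields another tree. A hyperedge containing x and y cannot
  avoid {u, v}, for otherwise y would lie in C; so it also contains u and v, and it stays
  connected in the new tree because its x-part contains u and its y-part contains v.
\<close>

definition induced_adj :: "'a set set \<Rightarrow> 'a set \<Rightarrow> 'a rel" where
  "induced_adj T S = {(a, b). {a, b} \<in> T \<and> a \<in> S \<and> b \<in> S}"

lemma connected_on_iff_induced_adj:
  "connected_on T S \<longleftrightarrow> (\<forall>x\<in>S. \<forall>y\<in>S. (x, y) \<in> (induced_adj T S)\<^sup>*)"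
  by (simp add: connected_on_def induced_adj_def)

lemma induced_adj_rtrancl_sym:
  assumes "(a, b) \<in> (induced_adj T S)\<^sup>*"
  shows "(b, a) \<in> (induced_adj T S)\<^sup>*"
proof -
  have "sym (induced_adj T S)"
    by (auto simp: sym_def induced_adj_def insert_commute)
  then show ?thesis
    using assms sym_rtrancl symD by metis
qed

lemma induced_adj_mono: "T \<subseteq> T' \<Longrightarrow> S \<subseteq> S' \<Longrightarrow> induced_adj T S \<subseteq> induced_adj T' S'"
  by (auto simp: induced_adj_def)

lemma induced_adj_diff_outside: "\<not> f \<subseteq> S \<Longrightarrow> induced_adj (T - {f}) S = induced_adj T S"
  unfolding induced_adj_def by blast

lemma induced_adj_rtrancl_mono:
  "p \<in> (induced_adj T S)\<^sup>* \<Longrightarrow> T \<subseteq> T' \<Longrightarrow> S \<subseteq> S' \<Longrightarrow> p \<in> (induced_adj T' S')\<^sup>*"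
  using rtrancl_mono[OF induced_adj_mono] by blast

lemma rtrancl_imp_distinct_path:
  assumes "(a, b) \<in> R\<^sup>*"
  obtains xs where "rtrancl_path (\<lambda>x y. (x, y) \<in> R) a xs b" and "distinct (a # xs)"
proof -
  from assms obtain xs where "rtrancl_path (\<lambda>x y. (x, y) \<in> R) a xs b"
    using rtranclp_eq_rtrancl_path[of "\<lambda>x y. (x, y) \<in> R"] by (auto simp: rtranclp_rtrancl_eq)
  then show ?thesis
    using rtrancl_path_distinct that by metis
qed

lemma is_graph_edge_neq: "is_graph V T \<Longrightarrow> {x, y} \<in> T \<Longrightarrow> x \<noteq> y"
  unfolding is_graph_def by (metis doubleton_eq_iff insert_absorb2)

lemma forest_edge_is_bridge:
  assumes graph: "is_graph V T" and acyclic: "\<nexists>xs. is_cycle T xs" and xy: "{x, y} \<in> T"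
  shows "(x, y) \<notin> (induced_adj (T - {{x, y}}) UNIV)\<^sup>*"
proof
  let ?R = "induced_adj (T - {{x, y}}) UNIV"
  assume "(x, y) \<in> ?R\<^sup>*"
  then obtain ys where path: "rtrancl_path (\<lambda>a b. (a, b) \<in> ?R) x ys y"
    and dist: "distinct (x # ys)"
    by (rule rtrancl_imp_distinct_path)
  have "x \<noteq> y" using is_graph_edge_neq[OF graph xy] .
  have "2 \<le> length ys"
  proof (rule ccontr)
    assume "\<not> 2 \<le> length ys"
    then consider "ys = []" | z where "ys = [z]"
      by (cases ys) (auto simp: Suc_le_eq)
    then show False
    proof cases
      case 1
      then show False using path \<open>x \<noteq> y\<close> by (auto elim: rtrancl_path.cases)
    next
      case 2
      then show False using path by (auto elim!: rtrancl_path.cases simp: induced_adj_def)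
    qed
  qed
  have "is_cycle T (x # ys)"
    unfolding is_cycle_def
  proof (intro conjI allI impI)
    show "3 \<le> length (x # ys)" using \<open>2 \<le> length ys\<close> by simp
    show "distinct (x # ys)" by (rule dist)
    fix i assume i: "i < length (x # ys)"
    show "{(x # ys) ! i, (x # ys) ! ((i + 1) mod length (x # ys))} \<in> T"
    proof (cases "i < length ys")
      case True
      then show ?thesis
        using rtrancl_path_nth[OF path True] by (simp add: induced_adj_def)
    next
      case False
      then have "i = length ys" using i by simp
      moreover have "ys \<noteq> []" using \<open>2 \<le> length ys\<close> by auto
      moreover have "last ys = y" using rtrancl_path_last[OF path \<open>ys \<noteq> []\<close>] .
      ultimately show ?thesis
        using xy by (simp add: last_conv_nth nth_Cons' insert_commute)
    qed
  qed
  then show False using acyclic by blast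
qed

lemma cycle_edges_distinct:
  assumes "is_cycle T xs" "i < length xs" "j < length xs" "i \<noteq> j"
  shows "{xs ! i, xs ! ((i + 1) mod length xs)} \<noteq> {xs ! j, xs ! ((j + 1) mod length xs)}"
proof
  let ?n = "length xs"
  assume eq: "{xs ! i, xs ! ((i + 1) mod ?n)} = {xs ! j, xs ! ((j + 1) mod ?n)}"
  have n: "3 \<le> ?n" and dist: "distinct xs" using assms(1) by (auto simp: is_cycle_def)
  have pos: "0 < ?n" using n by linarith
  have "xs ! i \<noteq> xs ! j" using assms dist by (simp add: nth_eq_iff_index_eq)
  then have "xs ! i = xs ! ((j + 1) mod ?n)" "xs ! j = xs ! ((i + 1) mod ?n)"
    using eq by (auto simp: doubleton_eq_iff)
  then have i_succ: "i = Suc j mod ?n" and j_succ: "j = Suc i mod ?n"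
    using assms dist mod_less_divisor[OF pos] by (simp_all add: nth_eq_iff_index_eq)
  have "Suc k mod ?n = (if Suc k = ?n then 0 else Suc k)" if "k < ?n" for k
    using that by (simp add: mod_Suc)
  then show False
    using i_succ j_succ assms(2,3) n by (auto split: if_splits)
qed

lemma cycle_edge_not_bridge:
  assumes cycle: "is_cycle T xs" and i: "i < length xs"
  defines "n \<equiv> length xs"
  defines "R \<equiv> induced_adj (T - {{xs ! i, xs ! ((i + 1) mod n)}}) UNIV"
  shows "(xs ! i, xs ! ((i + 1) mod n)) \<in> R\<^sup>*"
proof -
  have pos: "0 < n" using i unfolding n_def by linarith
  have step: "(xs ! j, xs ! ((j + 1) mod n)) \<in> R" if "j < n" "j \<noteq> i" for j
    using cycle cycle_edges_distinct[OF cycle that(1)[unfolded n_def] i that(2)] that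
    by (auto simp: R_def induced_adj_def is_cycle_def n_def)
  have walk: "(xs ! ((i + 1) mod n), xs ! ((i + 1 + k) mod n)) \<in> R\<^sup>*" if "k < n" for k
    using that
  proof (induction k)
    case 0
    then show ?case by simp
  next
    case (Suc k)
    have "(i + 1 + k) mod n \<noteq> i"
    proof
      assume "(i + 1 + k) mod n = i"
      then have "(i + Suc k) mod n = i mod n" using i by (simp add: n_def)
      then have "n dvd Suc k" by (simp add: mod_eq_dvd_iff_nat)
      then show False using Suc.prems by (simp add: nat_dvd_not_less)
    qed
    then have "(xs ! ((i + 1 + k) mod n), xs ! ((i + 1 + Suc k) mod n)) \<in> R"
      using step[of "(i + 1 + k) mod n"] mod_less_divisor[OF pos] by (simp add: n_def mod_Suc_eq)
    with Suc show ?case by simp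
  qed
  have "(i + 1 + (n - 1)) mod n = i"
    using i pos by (simp add: n_def)
  then have "(xs ! ((i + 1) mod n), xs ! i) \<in> R\<^sup>*"
    using walk[of "n - 1"] i by (simp add: n_def)
  then show ?thesis
    unfolding R_def by (rule induced_adj_rtrancl_sym)
qed

lemma rtrancl_path_avoiding_vertex:
  assumes "rtrancl_path (\<lambda>p q. (p, q) \<in> induced_adj T S) c xs b" and "a \<notin> set (c # xs)"
  shows "(c, b) \<in> (induced_adj {e \<in> T. a \<notin> e} S)\<^sup>*"
  using assms
proof (induction rule: rtrancl_path.induct)
  case (base x)
  then show ?case by simp
next
  case (step p q ys b)
  then have "(p, q) \<in> induced_adj {e \<in> T. a \<notin> e} S"
    by (auto simp: induced_adj_def)
  with step show ?case by (simp add: converse_rtrancl_into_rtrancl)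
qed

lemma distinct_path_crossing_edge:
  assumes "rtrancl_path (\<lambda>p q. (p, q) \<in> induced_adj T S) a xs b" and "distinct (a # xs)"
    and "a \<in> C" and "b \<notin> C"
  shows "\<exists>x y. (x, y) \<in> induced_adj T S \<and> x \<in> C \<and> y \<notin> C \<and>
    (a, x) \<in> (induced_adj (T - {{x, y}}) S)\<^sup>* \<and> (y, b) \<in> (induced_adj (T - {{x, y}}) S)\<^sup>*"
  using assms
proof (induction rule: rtrancl_path.induct)
  case (base x)
  then show ?case by simp
next
  case (step a c xs b)
  show ?case
  proof (cases "c \<in> C")
    case True
    with step obtain x y where xy: "(x, y) \<in> induced_adj T S" "x \<in> C" "y \<notin> C"
      and cx: "(c, x) \<in> (induced_adj (T - {{x, y}}) S)\<^sup>*"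
      and yb: "(y, b) \<in> (induced_adj (T - {{x, y}}) S)\<^sup>*"
      by auto
    have "{a, c} \<noteq> {x, y}" using step.prems(2) True \<open>y \<notin> C\<close> by (auto simp: doubleton_eq_iff)
    then have "(a, c) \<in> induced_adj (T - {{x, y}}) S"
      using step.hyps(1) by (auto simp: induced_adj_def)
    with xy cx yb show ?thesis by (blast intro: converse_rtrancl_into_rtrancl)
  next
    case False
    have "a \<notin> set (c # xs)" using step.prems(1) by simp
    from rtrancl_path_avoiding_vertex[OF step.hyps(2) this]
    have "(c, b) \<in> (induced_adj (T - {{a, c}}) S)\<^sup>*"
      by (rule induced_adj_rtrancl_mono) auto
    with step.hyps(1) step.prems(2) False show ?thesis by blast
  qed
qed

lemma rtrancl_crossing_edge:
  assumes "(a, b) \<in> (induced_adj T S)\<^sup>*" and "a \<in> C" and "b \<notin> C"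
  obtains x y where "(x, y) \<in> induced_adj T S" "x \<in> C" "y \<notin> C"
    "(a, x) \<in> (induced_adj (T - {{x, y}}) S)\<^sup>*" "(y, b) \<in> (induced_adj (T - {{x, y}}) S)\<^sup>*"
proof -
  obtain xs where "rtrancl_path (\<lambda>p q. (p, q) \<in> induced_adj T S) a xs b" "distinct (a # xs)"
    using assms(1) by (rule rtrancl_imp_distinct_path)
  from distinct_path_crossing_edge[OF this assms(2,3)] show ?thesis
    using that by blast
qed

lemma connected_on_minus_edge_cases:
  assumes "connected_on T S" and "a \<in> S" and "x \<in> S"
  shows "(a, x) \<in> (induced_adj (T - {{x, y}}) S)\<^sup>* \<or> (a, y) \<in> (induced_adj (T - {{x, y}}) S)\<^sup>*"
proof -
  have "(a, x) \<in> (induced_adj T S)\<^sup>*"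
    using assms by (simp add: connected_on_iff_induced_adj)
  then show ?thesis
  proof (induction rule: converse_rtrancl_induct)
    case base
    then show ?case by simp
  next
    case (step a b)
    show ?case
    proof (cases "{a, b} = {x, y}")
      case True
      then show ?thesis by (auto simp: doubleton_eq_iff)
    next
      case False
      with step.hyps(1) have "(a, b) \<in> induced_adj (T - {{x, y}}) S"
        by (auto simp: induced_adj_def)
      with step.IH show ?thesis by (blast intro: converse_rtrancl_into_rtrancl)
    qed
  qed
qed

lemma connected_on_edge_exchange:
  assumes conn: "connected_on T S" and "x \<in> S" "u \<in> S" "v \<in> S"
    and ux: "(u, x) \<in> (induced_adj (T - {{x, y}}) S)\<^sup>*"
    and yv: "(y, v) \<in> (induced_adj (T - {{x, y}}) S)\<^sup>*"
  shows "connected_on (insert {u, v} (T - {{x, y}})) S"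
proof -
  let ?R = "induced_adj (insert {u, v} (T - {{x, y}})) S"
  have R_sup: "(p, q) \<in> ?R\<^sup>*" if "(p, q) \<in> (induced_adj (T - {{x, y}}) S)\<^sup>*" for p q
    using that by (rule induced_adj_rtrancl_mono) auto
  have "(u, v) \<in> ?R" using \<open>u \<in> S\<close> \<open>v \<in> S\<close> by (simp add: induced_adj_def)
  then have xy: "(x, y) \<in> ?R\<^sup>*"
    using R_sup[OF induced_adj_rtrancl_sym[OF ux]] R_sup[OF induced_adj_rtrancl_sym[OF yv]]
    by (meson converse_rtrancl_into_rtrancl rtrancl_trans)
  have "(a, x) \<in> ?R\<^sup>*" if "a \<in> S" for a
    using connected_on_minus_edge_cases[OF conn that \<open>x \<in> S\<close>, of y] R_sup
      induced_adj_rtrancl_sym[OF xy] by (meson rtrancl_trans)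
  then show ?thesis
    unfolding connected_on_iff_induced_adj by (meson induced_adj_rtrancl_sym rtrancl_trans)
qed

lemma bridge_sides_within_connected_set:
  assumes conn: "connected_on T S" and "u \<in> S" "v \<in> S" "x \<in> S"
    and ux: "(u, x) \<in> (induced_adj (T - {{x, y}}) UNIV)\<^sup>*"
    and yv: "(y, v) \<in> (induced_adj (T - {{x, y}}) UNIV)\<^sup>*"
    and bridge: "(x, y) \<notin> (induced_adj (T - {{x, y}}) UNIV)\<^sup>*"
  shows "(u, x) \<in> (induced_adj (T - {{x, y}}) S)\<^sup>*" and "(y, v) \<in> (induced_adj (T - {{x, y}}) S)\<^sup>*"
proof -
  let ?R = "induced_adj (T - {{x, y}}) S" and ?U = "induced_adj (T - {{x, y}}) UNIV"
  have global: "(a, b) \<in> ?U\<^sup>*" if "(a, b) \<in> ?R\<^sup>*" for a b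
    using that by (rule induced_adj_rtrancl_mono) auto
  show "(u, x) \<in> ?R\<^sup>*"
  proof (rule ccontr)
    assume "(u, x) \<notin> ?R\<^sup>*"
    then have "(u, y) \<in> ?R\<^sup>*"
      using connected_on_minus_edge_cases[OF conn \<open>u \<in> S\<close> \<open>x \<in> S\<close>] by blast
    with induced_adj_rtrancl_sym[OF ux] have "(x, y) \<in> ?U\<^sup>*"
      by (blast intro: rtrancl_trans global)
    with bridge show False ..
  qed
  have "(v, y) \<in> ?R\<^sup>*"
  proof (rule ccontr)
    assume "(v, y) \<notin> ?R\<^sup>*"
    then have "(v, x) \<in> ?R\<^sup>*"
      using connected_on_minus_edge_cases[OF conn \<open>v \<in> S\<close> \<open>x \<in> S\<close>] by blast
    then have "(x, v) \<in> ?U\<^sup>*"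
      by (rule global[OF induced_adj_rtrancl_sym])
    then have "(x, y) \<in> ?U\<^sup>*" using induced_adj_rtrancl_sym[OF yv] by (rule rtrancl_trans)
    with bridge show False ..
  qed
  then show "(y, v) \<in> ?R\<^sup>*"
    by (rule induced_adj_rtrancl_sym)
qed

lemma is_tree_edge_exchange:
  assumes tree: "is_tree V T" and xy: "{x, y} \<in> T" and "u \<in> V" "v \<in> V" "u \<noteq> v"
    and ux: "(u, x) \<in> (induced_adj (T - {{x, y}}) V)\<^sup>*"
    and yv: "(y, v) \<in> (induced_adj (T - {{x, y}}) V)\<^sup>*"
  shows "is_tree V (insert {u, v} (T - {{x, y}}))"
proof -
  let ?T' = "insert {u, v} (T - {{x, y}})"
  have graph: "is_graph V T" and conn: "connected_on T V" and acyclic: "\<nexists>xs. is_cycle T xs"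
    using tree by (auto simp: is_tree_def)
  have "x \<in> V" using graph xy unfolding is_graph_def by (auto simp: doubleton_eq_iff)
  have "is_graph V ?T'"
    using graph \<open>u \<in> V\<close> \<open>v \<in> V\<close> \<open>u \<noteq> v\<close> by (auto simp: is_graph_def)
  moreover have "connected_on ?T' V"
    using connected_on_edge_exchange[OF conn \<open>x \<in> V\<close> \<open>u \<in> V\<close> \<open>v \<in> V\<close> ux yv] .
  moreover have "\<nexists>xs. is_cycle ?T' xs"
  proof
    assume "\<exists>xs. is_cycle ?T' xs"
    then obtain xs where cycle: "is_cycle ?T' xs" by blast
    let ?e = "\<lambda>i. {xs ! i, xs ! ((i + 1) mod length xs)}"
    show False
    proof (cases "\<exists>i < length xs. ?e i = {u, v}")
      case False
      then have "is_cycle T xs" using cycle by (auto simp: is_cycle_def)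
      then show False using acyclic by blast
    next
      case True
      then obtain i where i: "i < length xs" "?e i = {u, v}" by blast
      have "(xs ! i, xs ! ((i + 1) mod length xs)) \<in> (induced_adj (?T' - {?e i}) UNIV)\<^sup>*"
        by (rule cycle_edge_not_bridge[OF cycle i(1)])
      then have "(xs ! i, xs ! ((i + 1) mod length xs)) \<in> (induced_adj (T - {{x, y}}) UNIV)\<^sup>*"
        by (rule induced_adj_rtrancl_mono) (use i(2) in auto)
      then have "(u, v) \<in> (induced_adj (T - {{x, y}}) UNIV)\<^sup>*"
        using i(2) induced_adj_rtrancl_sym by (auto simp: doubleton_eq_iff)
      moreover have "(x, u) \<in> (induced_adj (T - {{x, y}}) UNIV)\<^sup>*"
        using induced_adj_rtrancl_sym[OF ux] by (rule induced_adj_rtrancl_mono) auto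
      moreover have "(v, y) \<in> (induced_adj (T - {{x, y}}) UNIV)\<^sup>*"
        using induced_adj_rtrancl_sym[OF yv] by (rule induced_adj_rtrancl_mono) auto
      ultimately show False
        using forest_edge_is_bridge[OF graph acyclic xy] by (meson rtrancl_trans)
    qed
  qed
  ultimately show ?thesis by (simp add: is_tree_def)
qed

lemma host_tree_edge_exchange:
  assumes host: "host_tree V Es T" and xy: "{x, y} \<in> T" and "u \<in> V" "v \<in> V" "u \<noteq> v"
    and ux: "(u, x) \<in> (induced_adj (T - {{x, y}}) V)\<^sup>*"
    and yv: "(y, v) \<in> (induced_adj (T - {{x, y}}) V)\<^sup>*"
    and hyperedges: "\<And>e. e \<in> Es \<Longrightarrow> {x, y} \<subseteq> e \<Longrightarrow> {u, v} \<subseteq> e"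
  shows "host_tree V Es (insert {u, v} (T - {{x, y}}))"
proof -
  let ?T' = "insert {u, v} (T - {{x, y}})"
  have tree: "is_tree V T" and conn: "\<And>e. e \<in> Es \<Longrightarrow> connected_on T e"
    using host by (auto simp: host_tree_def)
  have bridge: "(x, y) \<notin> (induced_adj (T - {{x, y}}) UNIV)\<^sup>*"
    using tree forest_edge_is_bridge[OF _ _ xy] by (auto simp: is_tree_def)
  have ux': "(u, x) \<in> (induced_adj (T - {{x, y}}) UNIV)\<^sup>*"
    using ux by (rule induced_adj_rtrancl_mono) auto
  have yv': "(y, v) \<in> (induced_adj (T - {{x, y}}) UNIV)\<^sup>*"
    using yv by (rule induced_adj_rtrancl_mono) auto
  have "connected_on ?T' e" if "e \<in> Es" for e
  proof (cases "{x, y} \<subseteq> e")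
    case True
    with hyperedges[OF that] have "x \<in> e" "u \<in> e" "v \<in> e" by auto
    with bridge_sides_within_connected_set[OF conn[OF that] _ _ _ ux' yv' bridge]
    show ?thesis
      by (intro connected_on_edge_exchange[OF conn[OF that]]) auto
  next
    case False
    then have "induced_adj T e = induced_adj (T - {{x, y}}) e"
      by (rule induced_adj_diff_outside[symmetric])
    also have "\<dots> \<subseteq> induced_adj ?T' e"
      by (rule induced_adj_mono) auto
    finally show ?thesis
      using conn[OF that] rtrancl_mono unfolding connected_on_iff_induced_adj by blast
  qed
  then show ?thesis
    using is_tree_edge_exchange[OF tree xy assms(3-5) ux yv] by (simp add: host_tree_def)
qed

lemma same_component_imp_rtrancl:
  assumes "same_component V Es a b"
    and "\<And>e p q. e \<in> Es \<Longrightarrow> p \<in> e \<Longrightarrow> q \<in> e \<Longrightarrow> (p, q) \<in> R\<^sup>*"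
  shows "(a, b) \<in> R\<^sup>*"
  using assms(1) unfolding same_component_def
proof (induction rule: rtrancl_induct)
  case base
  then show ?case by simp
next
  case (step b c)
  then obtain e where "e \<in> Es" "b \<in> e" "c \<in> e"
    by (auto simp: two_section_adj_def)
  with assms(2) step.IH show ?case by (blast intro: rtrancl_trans)
qed

lemma same_component_edges_avoiding_boundary:
  assumes "same_component V (edges_avoiding Es A) u x" and "\<not> same_component V (edges_avoiding Es A) u y"
    and "x \<in> V" "y \<in> V" "e \<in> Es" "{x, y} \<subseteq> e"
  shows "A \<subseteq> e"
proof (rule ccontr)
  assume "\<not> A \<subseteq> e"
  with assms have "x = y \<or> two_section_adj V (edges_avoiding Es A) x y"
    by (auto simp: two_section_adj_def edges_avoiding_def)
  with assms(1,2) show False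
    unfolding same_component_def by (auto intro: rtrancl_into_rtrancl)
qed

lemma host_tree_edge_separates:
  assumes host: "host_tree V Es T" and uv: "{u, v} \<in> T"
  shows "\<not> same_component V (edges_avoiding Es {u, v}) u v"
proof
  let ?R = "induced_adj (T - {{u, v}}) UNIV"
  assume "same_component V (edges_avoiding Es {u, v}) u v"
  then have "(u, v) \<in> ?R\<^sup>*"
  proof (rule same_component_imp_rtrancl)
    fix e p q assume "e \<in> edges_avoiding Es {u, v}" "p \<in> e" "q \<in> e"
    then have "e \<in> Es" and outside: "\<not> {u, v} \<subseteq> e"
      by (auto simp: edges_avoiding_def)
    with host \<open>p \<in> e\<close> \<open>q \<in> e\<close> have "(p, q) \<in> (induced_adj T e)\<^sup>*"
      by (auto simp: host_tree_def connected_on_iff_induced_adj)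
    then have "(p, q) \<in> (induced_adj (T - {{u, v}}) e)\<^sup>*"
      by (simp add: induced_adj_diff_outside[OF outside])
    then show "(p, q) \<in> ?R\<^sup>*"
      by (rule induced_adj_rtrancl_mono) auto
  qed
  moreover have "(u, v) \<notin> ?R\<^sup>*"
    using host forest_edge_is_bridge[OF _ _ uv] by (auto simp: host_tree_def is_tree_def)
  ultimately show False by contradiction
qed

theorem mainTheorem10:
  fixes V :: "'a set" and Es :: "'a set set" and u v :: 'a
  assumes "hypertree V Es" and "u \<in> V" and "v \<in> V"
  shows "(\<exists>T. host_tree V Es T \<and> {u, v} \<in> T) \<longleftrightarrow>
         \<not> same_component V (edges_avoiding Es {u, v}) u v"
proof
  assume "\<exists>T. host_tree V Es T \<and> {u, v} \<in> T"
  then obtain T where "host_tree V Es T" "{u, v} \<in> T" by blast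
  then show "\<not> same_component V (edges_avoiding Es {u, v}) u v"
    by (rule host_tree_edge_separates)
next
  let ?C = "{w. same_component V (edges_avoiding Es {u, v}) u w}"
  assume "\<not> same_component V (edges_avoiding Es {u, v}) u v"
  then have "u \<in> ?C" "v \<notin> ?C" "u \<noteq> v"
    by (auto simp: same_component_def)
  obtain T where host: "host_tree V Es T"
    using assms(1) by (auto simp: hypertree_def)
  then have "(u, v) \<in> (induced_adj T V)\<^sup>*"
    using assms(2,3) by (auto simp: host_tree_def is_tree_def connected_on_iff_induced_adj)
  then obtain x y where xy: "(x, y) \<in> induced_adj T V" "x \<in> ?C" "y \<notin> ?C"
    and ux: "(u, x) \<in> (induced_adj (T - {{x, y}}) V)\<^sup>*"
    and yv: "(y, v) \<in> (induced_adj (T - {{x, y}}) V)\<^sup>*"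
    using \<open>u \<in> ?C\<close> \<open>v \<notin> ?C\<close> by (rule rtrancl_crossing_edge)
  have "{u, v} \<subseteq> e" if "e \<in> Es" "{x, y} \<subseteq> e" for e
    using same_component_edges_avoiding_boundary[of V Es "{u, v}" u x y e] xy that
    by (simp add: induced_adj_def)
  then have "host_tree V Es (insert {u, v} (T - {{x, y}}))"
    using host_tree_edge_exchange[OF host _ assms(2,3) \<open>u \<noteq> v\<close> ux yv] xy(1)
    by (simp add: induced_adj_def)
  then show "\<exists>T. host_tree V Es T \<and> {u, v} \<in> T" by blast
qed

end
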